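(* Let $\lambda_0\in\mathfrak h^*_{\mathbb R}$ lie on exactly one $A_2$ vanishing line $P(n_0,\alpha_0)$. Then, with $f$ defined on all of $\mathfrak h^*_{\mathbb R}$ by the formula below, the coefficientwise limits exist and $$\lim_{\epsilon\to0^+}f(\lambda_0+\epsilon\alpha_0)-\lim_{\epsilon\to0^-}f(\lambda_0+\epsilon\alpha_0)=2\,e(\lambda_0)\,x^{n_0\alpha_0}f(\lambda_0-n_0\alpha_0),$$ where $e(\lambda_0)=+1$ if $\alpha_0\in\{\alpha_1,\alpha_2\}$, $e(\lambda_0)=+1$ if $\alpha_0=\alpha_3$ and $\lambda_0+\rho\notin C$, and $e(\lambda_0)=-1$ if $\alpha_0=\alpha_3$ and $\lambda_0+\rho\in C$.
   Context: $\mathfrak g=A_2$ ($\mathfrak{sl}_3$) with simple roots $\alpha_1,\alpha_2$, $(\alpha_1,\alpha_1)=(\alpha_2,\alpha_2)=2$, $(\alpha_1,\alpha_2)=-1$, $\alpha_3=\alpha_1+\alpha_2$, $\Delta_+=\{\alpha_1,\alpha_2,\alpha_3\}$, $\rho=\alpha_3$. $\mathfrak h^*_{\mathbb R}$ is the real span of $\alpha_1,\alpha_2$. The vanishing lines are $P(n,\alpha)=\{\lambda:(\alpha,\lambda+\rho)=n\}$, $n\in\mathbb Z_{\ge1}$, $\alpha\in\Delta_+$. $C=\{\lambda\in\mathfrak h^*_{\mathbb R}:(\alpha_1,\lambda)\ge0,(\alpha_2,\lambda)\ge0\}$. Monomials: $x^{\alpha_1}=x_1$, $x^{\alpha_2}=x_2$,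 $x^{\alpha_3}=x_1x_2$, $x^{n\alpha}=(x^\alpha)^n$. For $\lambda\in\mathfrak h^*_{\mathbb R}$ put $a_i=a_i(\lambda)=\max(0,\lfloor(\alpha_i,\lambda+\rho)\rfloor)$, $i=1,2,3$, and define $f(\lambda)=\tilde f(a_1,a_2,a_3)/D$ where $D=(1-x_1^2)(1-x_2^2)(1-x_1^2x_2^2)$ and $\tilde f(a_1,a_2,a_3)=(1+x_1)(1+x_2)(1+x_1x_2)-2x_1^{a_1+1}(1+x_2)(1+x_1x_2)-2x_2^{a_2+1}(1+x_1)(1+x_1x_2)-2(x_1x_2)^{a_3+1}(1+x_1)(1+x_2)+4x_1^{a_1+1}(x_1x_2)^{\min(a_2,a_3)+1}(1+x_2)+4x_2^{a_2+1}(x_1x_2)^{\min(a_1,a_3)+1}(1+x_1)+4x_1^{\max(a_1,a_3)+1}x_2^{\max(a_2,a_3)+1}(1+x_1x_2)-8x_1^{\min(a_2,a_3)+a_1+2}x_2^{\min(a_1,a_3)+a_2+2}$. *)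

theory Defs
  imports "HOL-Analysis.Analysis"
begin

text \<open>Points of h*_R are represented by coordinates (c1,c2) w.r.t. the basis alpha1, alpha2:
  the pair (c1,c2) stands for c1*alpha1 + c2*alpha2.\<close>

definition ip :: "real \<times> real \<Rightarrow> real \<times> real \<Rightarrow> real" where
  "ip u v = 2 * fst u * fst v - fst u * snd v - snd u * fst v + 2 * snd u * snd v"

datatype root = A1 | A2 | A3

fun rvec :: "root \<Rightarrow> real \<times> real" where
  "rvec A1 = (1, 0)" | "rvec A2 = (0, 1)" | "rvec A3 = (1, 1)"

definition rho :: "real \<times> real" where "rho = (1, 1)"

definition vline :: "nat \<Rightarrow> root \<Rightarrow> (real \<times> real) set" where
  "vline n a = {lam. ip (rvec a) (lam + rho) = real n}"

definition coneC :: "(real \<times> real) set" where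
  "coneC = {lam. ip (rvec A1) lam \<ge> 0 \<and> ip (rvec A2) lam \<ge> 0}"

text \<open>Formal power series in x1, x2 with integer coefficients: coefficient of x1^i x2^j.\<close>
type_synonym ps2 = "nat \<Rightarrow> nat \<Rightarrow> int"

definition mon :: "nat \<Rightarrow> nat \<Rightarrow> ps2" where
  "mon p q = (\<lambda>i j. if i = p \<and> j = q then 1 else 0)"

definition padd :: "ps2 \<Rightarrow> ps2 \<Rightarrow> ps2" where
  "padd f g = (\<lambda>i j. f i j + g i j)"

definition psc :: "int \<Rightarrow> ps2 \<Rightarrow> ps2" where
  "psc c f = (\<lambda>i j. c * f i j)"

definition pmul :: "ps2 \<Rightarrow> ps2 \<Rightarrow> ps2" where
  "pmul f g = (\<lambda>i j. \<Sum>a\<le>i. \<Sum>b\<le>j. f a b * g (i - a) (j - b))"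

text \<open>Division in Z[[x1,x2]] (the quotient is unique when the divisor has constant term 1).\<close>
definition pdiv :: "ps2 \<Rightarrow> ps2 \<Rightarrow> ps2" where
  "pdiv f d = (THE g. pmul g d = f)"

fun xroot :: "nat \<Rightarrow> root \<Rightarrow> ps2" where
  "xroot n A1 = mon n 0" | "xroot n A2 = mon 0 n" | "xroot n A3 = mon n n"

definition onep :: ps2 where "onep = mon 0 0"
definition Q1 :: ps2 where "Q1 = padd onep (mon 1 0)"
definition Q2 :: ps2 where "Q2 = padd onep (mon 0 1)"
definition Q3 :: ps2 where "Q3 = padd onep (mon 1 1)"

definition Dps :: ps2 where
  "Dps = pmul (pmul (padd onep (psc (-1) (mon 2 0))) (padd onep (psc (-1) (mon 0 2))))
              (padd onep (psc (-1) (mon 2 2)))"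

definition ftil :: "nat \<Rightarrow> nat \<Rightarrow> nat \<Rightarrow> ps2" where
  "ftil a1 a2 a3 =
     padd (pmul (pmul Q1 Q2) Q3)
    (padd (psc (-2) (pmul (pmul (mon (a1+1) 0) Q2) Q3))
    (padd (psc (-2) (pmul (pmul (mon 0 (a2+1)) Q1) Q3))
    (padd (psc (-2) (pmul (pmul (mon (a3+1) (a3+1)) Q1) Q2))
    (padd (psc 4 (pmul (pmul (mon (a1+1) 0) (mon (min a2 a3 + 1) (min a2 a3 + 1))) Q2))
    (padd (psc 4 (pmul (pmul (mon 0 (a2+1)) (mon (min a1 a3 + 1) (min a1 a3 + 1))) Q1))
    (padd (psc 4 (pmul (mon (max a1 a3 + 1) (max a2 a3 + 1)) Q3))
          (psc (-8) (mon (min a2 a3 + a1 + 2) (min a1 a3 + a2 + 2)))))))))"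

definition acoef :: "root \<Rightarrow> real \<times> real \<Rightarrow> nat" where
  "acoef a lam = nat (max 0 \<lfloor>ip (rvec a) (lam + rho)\<rfloor>)"

definition fA :: "real \<times> real \<Rightarrow> ps2" where
  "fA lam = pdiv (ftil (acoef A1 lam) (acoef A2 lam) (acoef A3 lam)) Dps"

definition esign :: "real \<times> real \<Rightarrow> root \<Rightarrow> int" where
  "esign lam a = (if a = A3 \<and> lam + rho \<in> coneC then -1 else 1)"

end

theory Submission
  imports Defs "HOL-Computational_Algebra.Formal_Power_Series"
begin

text \<open>Along the line \<open>\<lambda>\<^sub>0 + \<epsilon> \<alpha>\<^sub>0\<close> only the exponent belonging to \<open>\<alpha>\<^sub>0\<close> moves near
  \<open>\<epsilon> = 0\<close>: as \<open>(\<alpha>\<^sub>0, \<alpha>\<^sub>0) = 2\<close>, it is \<open>n\<^sub>0\<close> for small \<open>\<epsilon> \<ge> 0\<close> and \<open>n\<^sub>0 - 1\<close> for small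
  \<open>\<epsilon> < 0\<close>. The other two exponents are locally constant, because \<open>\<lambda>\<^sub>0\<close> lies on no other
  vanishing line, so each other pairing \<open>(\<alpha>, \<lambda>\<^sub>0 + \<rho>)\<close> is non-integral or at most 0.
  Hence \<open>f\<close> is eventually constant on both sides of the wall and the jump is a difference of two
  values of \<open>ftil\<close> divided by \<open>D\<close>. Expressing all exponents at \<open>\<lambda>\<^sub>0\<close> and at
  \<open>\<lambda>\<^sub>0 - n\<^sub>0 \<alpha>\<^sub>0\<close> through a single floor \<open>k\<close> turns the claim into polynomial identities;
  for \<open>\<alpha>\<^sub>3\<close> the sign is \<open>-1\<close> exactly when \<open>0 \<le> k < n\<^sub>0\<close>, i.e. when \<open>\<lambda>\<^sub>0 + \<rho> \<in> C\<close>.\<close>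

text \<open>Power series in \<open>x\<^sub>1, x\<^sub>2\<close> are identified with \<open>(\<int>[[x\<^sub>1]])[[x\<^sub>2]]\<close>, an integral
  domain in which \<open>D\<close> is a unit, so that \<open>pdiv _ Dps\<close> becomes multiplication by its inverse.\<close>

definition fps2 :: "ps2 \<Rightarrow> int fps fps" where
  "fps2 f = Abs_fps (\<lambda>j. Abs_fps (\<lambda>i. f i j))"

definition X1 :: "int fps fps" where "X1 = fps_const fps_X"
definition X2 :: "int fps fps" where "X2 = fps_X"

lemma fps2_nth [simp]: "fps_nth (fps_nth (fps2 f) j) i = f i j"
  by (simp add: fps2_def)

lemma fps2_inject: "fps2 f = fps2 g \<longleftrightarrow> f = g"
  by (metis fps2_nth ext)

lemma fps2_padd: "fps2 (padd f g) = fps2 f + fps2 g"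
  by (intro fps_ext) (simp add: padd_def)

lemma fps2_diff: "fps2 (\<lambda>i j. f i j - g i j) = fps2 f - fps2 g"
  by (intro fps_ext) simp

lemma fps2_psc: "fps2 (psc c f) = of_int c * fps2 f"
  by (intro fps_ext) (simp add: psc_def flip: fps_of_int)

lemma fps2_mon: "fps2 (mon p q) = X1 ^ p * X2 ^ q"
  by (intro fps_ext) (auto simp add: mon_def X1_def X2_def)

lemma fps2_pmul: "fps2 (pmul f g) = fps2 f * fps2 g"
proof (intro fps_ext)
  fix j i
  have "fps_nth (fps_nth (fps2 f * fps2 g) j) i
      = (\<Sum>b\<le>j. \<Sum>a\<le>i. f a b * g (i - a) (j - b))"
    by (simp add: fps_mult_nth fps_sum_nth atLeast0AtMost)
  also have "\<dots> = pmul f g i j"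
    by (simp add: pmul_def sum.swap[of _ "{..j}"])
  finally show "fps_nth (fps_nth (fps2 (pmul f g)) j) i = fps_nth (fps_nth (fps2 f * fps2 g) j) i"
    by simp
qed

lemma fps2_pdiv:
  assumes u: "fps2 d * u = 1"
  shows "fps2 (pdiv f d) = fps2 f * u"
proof -
  define g where "g = (\<lambda>i j. fps_nth (fps_nth (fps2 f * u) j) i)"
  have fps2_g: "fps2 g = fps2 f * u"
    by (intro fps_ext) (simp add: g_def)
  have "pmul g d = f"
    by (simp flip: fps2_inject add: fps2_pmul fps2_g mult.assoc mult.commute[of u] u)
  moreover have "h = g" if "pmul h d = f" for h
  proof -
    have "fps2 h * fps2 d = fps2 g * fps2 d"
      using that \<open>pmul g d = f\<close> by (metis fps2_pmul)
    moreover have "fps2 d \<noteq> 0"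
      using u by auto
    ultimately show "h = g"
      by (simp add: fps2_inject)
  qed
  ultimately have "pdiv f d = g"
    unfolding pdiv_def by (rule the_equality)
  then show ?thesis
    using fps2_g by simp
qed

lemma fps2_Dps_invertible: "\<exists>u. fps2 Dps * u = 1"
proof -
  have "fps_nth (fps_nth (fps2 Dps) 0) 0 = 1"
    by (simp add: Dps_def pmul_def padd_def psc_def onep_def mon_def)
  then have "fps_nth (fps2 Dps) 0 * fps_right_inverse (fps_nth (fps2 Dps) 0) 1 = 1"
    by (intro fps_right_inverse) simp
  then show ?thesis
    using fps_right_inverse by blast
qed

definition ftil_eval :: "'a::comm_ring_1 \<Rightarrow> 'a \<Rightarrow> nat \<Rightarrow> nat \<Rightarrow> nat \<Rightarrow> 'a" where
  "ftil_eval x y a1 a2 a3 = (1+x)*(1+y)*(1+x*y) - 2*x^(a1+1)*(1+y)*(1+x*y) - 2*y^(a2+1)*(1+x)*(1+x*y)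
    - 2*(x*y)^(a3+1)*(1+x)*(1+y) + 4*x^(a1+1)*(x*y)^(min a2 a3+1)*(1+y)
    + 4*y^(a2+1)*(x*y)^(min a1 a3+1)*(1+x) + 4*x^(max a1 a3+1)*y^(max a2 a3+1)*(1+x*y)
    - 8*x^(min a2 a3+a1+2)*y^(min a1 a3+a2+2)"

fun xroot_eval :: "'a::comm_ring_1 \<Rightarrow> 'a \<Rightarrow> nat \<Rightarrow> root \<Rightarrow> 'a" where
  "xroot_eval x y n A1 = x ^ n" | "xroot_eval x y n A2 = y ^ n" | "xroot_eval x y n A3 = (x * y) ^ n"

lemma fps2_ftil: "fps2 (ftil a1 a2 a3) = ftil_eval X1 X2 a1 a2 a3"
  unfolding ftil_def ftil_eval_def Q1_def Q2_def Q3_def onep_def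
  by (simp add: fps2_padd fps2_pmul fps2_psc fps2_mon algebra_simps)

lemma fps2_xroot: "fps2 (xroot n a) = xroot_eval X1 X2 n a"
  by (cases a) (simp_all add: fps2_mon power_mult_distrib)

lemma ftil_eval_swap: "ftil_eval x y a1 a2 a3 = ftil_eval y x a2 a1 a3"
  unfolding ftil_eval_def by (simp add: algebra_simps min.commute max.commute)

lemma ftil_eval_jump_simple_root:
  assumes "n \<ge> 1"
  shows "ftil_eval x y n (nat (max 0 k)) (nat (max 0 (int n + k)))
           - ftil_eval x y (n - 1) (nat (max 0 k)) (nat (max 0 (int n + k)))
         = 2 * x ^ n * ftil_eval x y 0 (nat (max 0 (int n + k))) (nat (max 0 k))"
proof (cases "k \<ge> 0")
  case True
  then obtain p where p: "k = int p"
    using nonneg_int_cases by blast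
  obtain m where m: "n = m + 1"
    using assms by (cases n) auto
  have "nat (max 0 k) = p" "nat (max 0 (int n + k)) = m + 1 + p"
    using p m by simp_all
  then show ?thesis
    by (simp only:) (simp add: m ftil_eval_def power_add algebra_simps)
next
  case False
  define q where "q = nat (max 0 (int n + k))"
  define r where "r = n - 1 - q"
  have "n = q + r + 1" "nat (max 0 k) = 0"
    using False assms unfolding q_def r_def by linarith+
  then show ?thesis
    unfolding q_def[symmetric] ftil_eval_def by (simp add: power_add algebra_simps)
qed

lemma ftil_eval_jump_highest_root:
  assumes "n \<ge> 1"
  shows "ftil_eval x y (nat (max 0 k)) (nat (max 0 (int n - k - 1))) n
           - ftil_eval x y (nat (max 0 k)) (nat (max 0 (int n - k - 1))) (n - 1)
         = (if 0 \<le> k \<and> k < int n then - 2 else 2) * (x * y) ^ n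
             * ftil_eval x y (nat (max 0 (k - int n))) (nat (max 0 (- k - 1))) 0"
proof -
  obtain m where m: "n = m + 1"
    using assms by (cases n) auto
  consider (inside) "0 \<le> k" "k < int n" | (above) "int n \<le> k" | (below) "k < 0"
    by linarith
  then show ?thesis
  proof cases
    case inside
    define p r where "p = nat k" and "r = n - 1 - p"
    have "nat (max 0 k) = p" "nat (max 0 (int n - k - 1)) = r" "nat (max 0 (k - int n)) = 0"
      "nat (max 0 (- k - 1)) = 0" "n = p + r + 1"
      using inside unfolding p_def r_def by linarith+
    then show ?thesis
      using inside by (simp only:) (simp add: ftil_eval_def power_add algebra_simps)
  next
    case above
    define p where "p = nat (k - int n)"
    have "nat (max 0 k) = m + 1 + p" "nat (max 0 (int n - k - 1)) = 0"
      "nat (max 0 (k - int n)) = p" "nat (max 0 (- k - 1)) = 0"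
      using above m unfolding p_def by linarith+
    then show ?thesis
      using above by (simp only:) (simp add: m ftil_eval_def power_add algebra_simps)
  next
    case below
    define p where "p = nat (- k - 1)"
    have "nat (max 0 k) = 0" "nat (max 0 (int n - k - 1)) = m + 1 + p"
      "nat (max 0 (k - int n)) = 0" "nat (max 0 (- k - 1)) = p"
      using below m unfolding p_def by linarith+
    then show ?thesis
      using below by (simp only:) (simp add: m ftil_eval_def power_add algebra_simps)
  qed
qed

lemma ip_add_right: "ip u (v + w) = ip u v + ip u w"
  by (simp add: ip_def algebra_simps)

lemma ip_scaleR_right: "ip u (c *\<^sub>R v) = c * ip u v"
  by (simp add: ip_def algebra_simps)

lemma ip_rvec_rvec [simp]:
  "ip (rvec a) (rvec b) = (if a = b then 2 else if a = A3 \<or> b = A3 then 1 else -1)"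
  by (cases a; cases b) (simp_all add: ip_def)

lemma ip_rvec_A3: "ip (rvec A3) w = ip (rvec A1) w + ip (rvec A2) w"
  by (simp add: ip_def)

lemma acoef_add: "acoef b (lam + w) = nat (max 0 \<lfloor>ip (rvec b) (lam + rho) + ip (rvec b) w\<rfloor>)"
  unfolding acoef_def by (simp add: ip_add_right add_ac)

lemma acoef_diff: "acoef b (lam - w) = nat (max 0 \<lfloor>ip (rvec b) (lam + rho) - ip (rvec b) w\<rfloor>)"
  unfolding acoef_def by (simp add: ip_def algebra_simps)

lemma acoef_vline: "lam \<in> vline n a \<Longrightarrow> acoef a lam = n"
  by (simp add: acoef_def vline_def)

lemma acoef_eventually_const:
  assumes "\<forall>n \<ge> 1. lam \<notin> vline n b"
  shows "\<forall>\<^sub>F e in at 0. acoef b (lam + e *\<^sub>R v) = acoef b lam"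
proof -
  define t where "t = ip (rvec b) (lam + rho)"
  have lim: "((\<lambda>e. t + e * ip (rvec b) v) \<longlongrightarrow> t) (at 0)"
    by (auto intro!: tendsto_eq_intros)
  show ?thesis
  proof (cases "t \<in> \<int>")
    case True
    then obtain z where z: "t = of_int z"
      by (auto elim: Ints_cases)
    have "z \<le> 0"
    proof (rule ccontr)
      assume "\<not> z \<le> 0"
      then have "lam \<in> vline (nat z) b"
        using z by (simp add: vline_def t_def)
      with assms \<open>\<not> z \<le> 0\<close> show False
        by simp
    qed
    with z have "\<forall>\<^sub>F e in at 0. t + e * ip (rvec b) v < 1 \<and> t \<le> 0"
      using order_tendstoD(2)[OF lim, of 1] by simp
    then show ?thesis
      by eventually_elim
        (simp only: acoef_add, simp add: acoef_def ip_scaleR_right t_def floor_le_iff)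
  next
    case False
    show ?thesis
      using eventually_floor_eq[OF lim False]
      by eventually_elim (simp only: acoef_add, simp add: acoef_def ip_scaleR_right t_def)
  qed
qed

lemma acoef_right_of_vline:
  assumes "lam \<in> vline n a"
  shows "\<forall>\<^sub>F e in at_right 0. acoef a (lam + e *\<^sub>R rvec a) = n"
  unfolding eventually_at_right_field
proof (intro exI[of _ "1/2"] conjI allI impI)
  fix e :: real
  assume "0 < e" "e < 1/2"
  then have "\<lfloor>real n + e * 2\<rfloor> = int n"
    by (simp add: floor_eq_iff)
  then show "acoef a (lam + e *\<^sub>R rvec a) = n"
    using assms by (simp add: acoef_add ip_scaleR_right vline_def)
qed simp

lemma acoef_left_of_vline:
  assumes "lam \<in> vline n a"
  shows "\<forall>\<^sub>F e in at_left 0. acoef a (lam + e *\<^sub>R rvec a) = n - 1"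
  unfolding eventually_at_left_field
proof (intro exI[of _ "-1/2"] conjI allI impI)
  fix e :: real
  assume "-1/2 < e" "e < 0"
  then have "\<lfloor>real n + e * 2\<rfloor> = int n - 1"
    by (simp add: floor_eq_iff)
  then show "acoef a (lam + e *\<^sub>R rvec a) = n - 1"
    using assms by (simp add: acoef_add ip_scaleR_right vline_def nat_diff_distrib)
qed simp

lemma ftil_eval_jump_A1:
  assumes "lam \<in> vline n A1" "n \<ge> 1"
  defines "lam' \<equiv> lam - real n *\<^sub>R rvec A1"
  shows "ftil_eval x y (acoef A1 lam) (acoef A2 lam) (acoef A3 lam)
           - ftil_eval x y (acoef A1 lam - 1) (acoef A2 lam) (acoef A3 lam)
         = 2 * x ^ n * ftil_eval x y (acoef A1 lam') (acoef A2 lam') (acoef A3 lam')"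
proof -
  define k where "k = \<lfloor>ip (rvec A2) (lam + rho)\<rfloor>"
  have t1: "ip (rvec A1) (lam + rho) = real n"
    using assms(1) by (simp add: vline_def)
  have "acoef A1 lam = n" "acoef A2 lam = nat (max 0 k)" "acoef A3 lam = nat (max 0 (int n + k))"
    "acoef A1 lam' = 0" "acoef A2 lam' = nat (max 0 (int n + k))" "acoef A3 lam' = nat (max 0 k)"
    unfolding lam'_def acoef_diff
    by (simp_all add: acoef_def ip_scaleR_right ip_rvec_A3 t1 k_def del: rvec.simps)
  then show ?thesis
    using ftil_eval_jump_simple_root[OF assms(2)] by simp
qed

lemma ftil_eval_jump_A2:
  assumes "lam \<in> vline n A2" "n \<ge> 1"
  defines "lam' \<equiv> lam - real n *\<^sub>R rvec A2"
  shows "ftil_eval x y (acoef A1 lam) (acoef A2 lam) (acoef A3 lam)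
           - ftil_eval x y (acoef A1 lam) (acoef A2 lam - 1) (acoef A3 lam)
         = 2 * y ^ n * ftil_eval x y (acoef A1 lam') (acoef A2 lam') (acoef A3 lam')"
proof -
  define k where "k = \<lfloor>ip (rvec A1) (lam + rho)\<rfloor>"
  have t2: "ip (rvec A2) (lam + rho) = real n"
    using assms(1) by (simp add: vline_def)
  have "acoef A1 lam = nat (max 0 k)" "acoef A2 lam = n" "acoef A3 lam = nat (max 0 (int n + k))"
    "acoef A1 lam' = nat (max 0 (int n + k))" "acoef A2 lam' = 0" "acoef A3 lam' = nat (max 0 k)"
    unfolding lam'_def acoef_diff
    by (simp_all add: acoef_def ip_scaleR_right ip_rvec_A3 t2 k_def del: rvec.simps)
  then show ?thesis
    using ftil_eval_jump_simple_root[OF assms(2), of y x] by (simp add: ftil_eval_swap[of x])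
qed

lemma ftil_eval_jump_A3:
  assumes "lam \<in> vline n A3" "n \<ge> 1" "ip (rvec A1) (lam + rho) \<notin> \<int>"
  defines "lam' \<equiv> lam - real n *\<^sub>R rvec A3"
  shows "ftil_eval x y (acoef A1 lam) (acoef A2 lam) (acoef A3 lam)
           - ftil_eval x y (acoef A1 lam) (acoef A2 lam) (acoef A3 lam - 1)
         = (if lam + rho \<in> coneC then - 2 else 2) * (x * y) ^ n
             * ftil_eval x y (acoef A1 lam') (acoef A2 lam') (acoef A3 lam')"
proof -
  define t where "t = ip (rvec A1) (lam + rho)"
  define k where "k = \<lfloor>t\<rfloor>"
  have t2: "ip (rvec A2) (lam + rho) = real n - t"
    using assms(1) by (simp add: vline_def ip_rvec_A3 t_def del: rvec.simps)
  have k: "of_int k < t" "t < of_int k + 1"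
    using assms(3) of_int_floor_le[of t] unfolding k_def t_def
    by (auto simp: order_le_less)
  have floors: "\<lfloor>real n - t\<rfloor> = int n - k - 1" "\<lfloor>t - real n\<rfloor> = k - int n"
    "\<lfloor>- t\<rfloor> = - k - 1"
    using k by (simp_all add: floor_eq_iff)
  have cone: "lam + rho \<in> coneC \<longleftrightarrow> 0 \<le> k \<and> k < int n"
    using k t2 by (simp add: coneC_def t_def) linarith
  have "acoef A1 lam = nat (max 0 k)" "acoef A2 lam = nat (max 0 (int n - k - 1))" "acoef A3 lam = n"
    "acoef A1 lam' = nat (max 0 (k - int n))" "acoef A2 lam' = nat (max 0 (- k - 1))" "acoef A3 lam' = 0"
    using assms(1) floors unfolding lam'_def acoef_diff
    by (simp_all add: acoef_def ip_scaleR_right ip_rvec_A3 t2 k_def vline_def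
        flip: t_def del: rvec.simps)
  then show ?thesis
    using ftil_eval_jump_highest_root[OF assms(2), of x y k] cone by simp
qed

lemma ftil_eval_jump:
  assumes "n \<ge> 1" and "lam \<in> vline n a"
    and "\<forall>m b. m \<ge> 1 \<and> lam \<in> vline m b \<longrightarrow> m = n \<and> b = a"
  defines "lam' \<equiv> lam - real n *\<^sub>R rvec a"
  shows "ftil_eval x y (acoef A1 lam) (acoef A2 lam) (acoef A3 lam)
           - ftil_eval x y (acoef A1 lam - of_bool (a = A1)) (acoef A2 lam - of_bool (a = A2))
               (acoef A3 lam - of_bool (a = A3))
         = of_int (2 * esign lam a) * xroot_eval x y n a
             * ftil_eval x y (acoef A1 lam') (acoef A2 lam') (acoef A3 lam')"
proof (cases a)
  case A1
  then show ?thesis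
    using ftil_eval_jump_A1[OF assms(2)[unfolded A1] assms(1)] by (simp add: lam'_def esign_def)
next
  case A2
  then show ?thesis
    using ftil_eval_jump_A2[OF assms(2)[unfolded A2] assms(1)] by (simp add: lam'_def esign_def)
next
  case A3
  txt \<open>Otherwise the pairings with \<open>\<alpha>\<^sub>1\<close> and \<open>\<alpha>\<^sub>2\<close> would be integers with sum \<open>n \<ge> 1\<close>,
    putting \<open>lam\<close> on a second vanishing line.\<close>
  have "ip (rvec A1) (lam + rho) \<notin> \<int>"
  proof
    assume "ip (rvec A1) (lam + rho) \<in> \<int>"
    then obtain z where z: "ip (rvec A1) (lam + rho) = of_int z"
      by (auto elim: Ints_cases)
    have "ip (rvec A2) (lam + rho) = of_int (int n - z)"
      using assms(2) z A3 by (simp add: vline_def ip_rvec_A3 del: rvec.simps)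
    then have "(nat z \<ge> 1 \<and> lam \<in> vline (nat z) A1)
        \<or> (nat (int n - z) \<ge> 1 \<and> lam \<in> vline (nat (int n - z)) A2)"
      using z assms(1) by (cases "z \<ge> 1") (simp_all add: vline_def le_nat_iff)
    then show False
      using assms(3) A3 by auto
  qed
  then show ?thesis
    using ftil_eval_jump_A3[OF assms(2)[unfolded A3] assms(1), where x = x and y = y] A3
    by (simp add: lam'_def esign_def)
qed

definition fA_below :: "real \<times> real \<Rightarrow> root \<Rightarrow> ps2" where
  "fA_below lam a = pdiv (ftil (acoef A1 lam - of_bool (a = A1)) (acoef A2 lam - of_bool (a = A2))
                              (acoef A3 lam - of_bool (a = A3))) Dps"

lemma eventually_acoef_right:
  assumes "lam \<in> vline n a" and "\<forall>m b. m \<ge> 1 \<and> lam \<in> vline m b \<longrightarrow> m = n \<and> b = a"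
  shows "\<forall>\<^sub>F e in at_right 0. acoef b (lam + e *\<^sub>R rvec a) = acoef b lam"
proof (cases "b = a")
  case True
  then show ?thesis
    using acoef_right_of_vline[OF assms(1)] acoef_vline[OF assms(1)] by simp
next
  case False
  then show ?thesis
    using acoef_eventually_const[of lam b "rvec a"] assms(2) by (auto simp: eventually_at_split)
qed

lemma eventually_acoef_left:
  assumes "lam \<in> vline n a" and "\<forall>m b. m \<ge> 1 \<and> lam \<in> vline m b \<longrightarrow> m = n \<and> b = a"
  shows "\<forall>\<^sub>F e in at_left 0. acoef b (lam + e *\<^sub>R rvec a) = acoef b lam - of_bool (a = b)"
proof (cases "b = a")
  case True
  then show ?thesis
    using acoef_left_of_vline[OF assms(1)] acoef_vline[OF assms(1)] by simp
next
  case False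
  then show ?thesis
    using acoef_eventually_const[of lam b "rvec a"] assms(2) by (auto simp: eventually_at_split)
qed

lemma eventually_fA_right:
  assumes "lam \<in> vline n a" and "\<forall>m b. m \<ge> 1 \<and> lam \<in> vline m b \<longrightarrow> m = n \<and> b = a"
  shows "\<forall>\<^sub>F e in at_right 0. fA (lam + e *\<^sub>R rvec a) = fA lam"
  using eventually_acoef_right[OF assms, of A1] eventually_acoef_right[OF assms, of A2]
    eventually_acoef_right[OF assms, of A3]
  unfolding fA_def by eventually_elim simp

lemma eventually_fA_left:
  assumes "lam \<in> vline n a" and "\<forall>m b. m \<ge> 1 \<and> lam \<in> vline m b \<longrightarrow> m = n \<and> b = a"
  shows "\<forall>\<^sub>F e in at_left 0. fA (lam + e *\<^sub>R rvec a) = fA_below lam a"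
  using eventually_acoef_left[OF assms, of A1] eventually_acoef_left[OF assms, of A2]
    eventually_acoef_left[OF assms, of A3]
  unfolding fA_def fA_below_def by eventually_elim simp

lemma fA_jump:
  assumes "n \<ge> 1" and "lam \<in> vline n a"
    and "\<forall>m b. m \<ge> 1 \<and> lam \<in> vline m b \<longrightarrow> m = n \<and> b = a"
  defines "lam' \<equiv> lam - real n *\<^sub>R rvec a"
  shows "(\<lambda>i j. fA lam i j - fA_below lam a i j)
           = psc (2 * esign lam a) (pmul (xroot n a) (fA lam'))"
proof -
  obtain u where u: "fps2 Dps * u = 1"
    using fps2_Dps_invertible by blast
  have "fps2 (\<lambda>i j. fA lam i j - fA_below lam a i j)
      = (ftil_eval X1 X2 (acoef A1 lam) (acoef A2 lam) (acoef A3 lam)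
          - ftil_eval X1 X2 (acoef A1 lam - of_bool (a = A1)) (acoef A2 lam - of_bool (a = A2))
              (acoef A3 lam - of_bool (a = A3))) * u"
    by (simp add: fps2_diff fps2_pdiv[OF u] fps2_ftil fA_def fA_below_def left_diff_distrib)
  also have "\<dots> = of_int (2 * esign lam a) * xroot_eval X1 X2 n a
      * ftil_eval X1 X2 (acoef A1 lam') (acoef A2 lam') (acoef A3 lam') * u"
    unfolding lam'_def ftil_eval_jump[OF assms(1-3)] ..
  also have "\<dots> = fps2 (psc (2 * esign lam a) (pmul (xroot n a) (fA lam')))"
    by (simp add: fps2_psc fps2_pmul fps2_xroot fps2_pdiv[OF u] fps2_ftil fA_def mult.assoc)
  finally show ?thesis
    by (simp only: fps2_inject)
qed

theorem lemma5:
  fixes lam0 :: "real \<times> real" and n0 :: nat and a0 :: root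
  assumes "n0 \<ge> 1" and "lam0 \<in> vline n0 a0"
    and "\<forall>n a. n \<ge> 1 \<and> lam0 \<in> vline n a \<longrightarrow> n = n0 \<and> a = a0"
  shows "\<exists>Lp Lm :: ps2.
     (\<forall>i j. ((\<lambda>\<epsilon>. fA (lam0 + \<epsilon> *\<^sub>R rvec a0) i j) \<longlongrightarrow> Lp i j) (at_right 0)) \<and>
     (\<forall>i j. ((\<lambda>\<epsilon>. fA (lam0 + \<epsilon> *\<^sub>R rvec a0) i j) \<longlongrightarrow> Lm i j) (at_left 0)) \<and>
     (\<lambda>i j. Lp i j - Lm i j) = psc (2 * esign lam0 a0) (pmul (xroot n0 a0) (fA (lam0 - real n0 *\<^sub>R rvec a0)))"
proof (intro exI conjI allI)
  fix i j
  show "((\<lambda>\<epsilon>. fA (lam0 + \<epsilon> *\<^sub>R rvec a0) i j) \<longlongrightarrow> fA lam0 i j) (at_right 0)"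
    using eventually_fA_right[OF assms(2,3)] by (intro tendsto_eventually) (auto elim: eventually_mono)
  show "((\<lambda>\<epsilon>. fA (lam0 + \<epsilon> *\<^sub>R rvec a0) i j) \<longlongrightarrow> fA_below lam0 a0 i j) (at_left 0)"
    using eventually_fA_left[OF assms(2,3)] by (intro tendsto_eventually) (auto elim: eventually_mono)
next
  show "(\<lambda>i j. fA lam0 i j - fA_below lam0 a0 i j)
      = psc (2 * esign lam0 a0) (pmul (xroot n0 a0) (fA (lam0 - real n0 *\<^sub>R rvec a0)))"
    by (rule fA_jump[OF assms])
qed

end
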